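(* Let $F$ be a dyadic non-archimedean local field of characteristic $0$ and let $B=(b_{ij})\in\mathcal H_n(\mathfrak o)$ be a nondegenerate reduced form of GK-type $(\underline a,\sigma)$. (1) If $n=\deg B$ is odd and $i_0\in\mathcal P^0(\sigma)$, then $\mathrm{ord}(b_{i_0i_0})\equiv\mathrm{ord}(\det B)\pmod 2$. (2) If $n$ is even and $\xi_B=0$, then for every integer $k$ there is $i_0\in\mathcal P^0(\sigma)$ with $\mathrm{ord}(b_{i_0i_0})\equiv k\pmod2$.
   Context: $F$ is a non-archimedean local field of characteristic $0$ with ring of integers $\mathfrak o$, prime element $\varpi$, residue field of even cardinality (dyadic); $\mathrm{ord}$ is the normalized valuation ($\mathrm{ord}(\varpi)=1$, $\mathrm{ord}(0)=+\infty$). $\mathcal H_n(\mathfrak o)$ is the set of symmetric $B=(b_{ij})\in M_n(F)$ with $b_{ii}\in\mathfrak o$ and $2b_{ij}\in\mathfrak o$. For nondegenerate $B$: $D_B=(-4)^{[n/2]}\det B$, and $\xi_B=1,-1,0$ according as $D_B\in F^{\times2}$, $F(\sqrt{D_B})/F$ is an unramified quadratic extension, or is ramified. Admissible involutions: let $\underline a=(a_1,\dots,a_n)$ be a non-decreasing sequence of non-negative integers, written as $m_1$ repeated $n_1$ times, ..., $m_r$ repeated $n_r$ times with $m_1<\dots<m_r$; $n_j^*=n_1+\dots+n_j$, $I_s=\{n_{s-1}^*+1,\dots,n_s^*\}$. For an involution $\sigma\in\mathfrak S_n$ put $\mathcal P^0=\{i:\sigma(i)=i\}$, $\mathcal P^+=\{i:a_i>a_{\sigma(i)}\}$,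 $\mathcal P^-=\{i:a_i<a_{\sigma(i)}\}$. $\sigma$ is $\underline a$-admissible if: (i) $\mathcal P^0$ has at most two elements, and if it has two distinct elements $i,j$ then $a_i\not\equiv a_j \pmod 2$; moreover if $i\in I_s\cap\mathcal P^0$ then $i=\max I_s$ and $i=\max\{j\in\mathcal P^0\cup\mathcal P^+: a_j\equiv a_i\pmod2\}$; (ii) for each $s$, $I_s\cap\mathcal P^-$ has at most one element, and if $i\in I_s\cap\mathcal P^-$ then $i=\max I_s$ and $\sigma(i)=\min\{j\in\mathcal P^+: j>i,\ a_j\equiv a_i\pmod 2\}$; (iii) for each $s$, $I_s\cap\mathcal P^+$ has at most one element, and if $i\in I_s\cap\mathcal P^+$ then $i=\min I_s$ and $\sigma(i)=\max\{j\in\mathcal P^-: j<i,\ a_j\equiv a_i\pmod 2\}$; (iv) if $a_i=a_{\sigma(i)}$ then $|i-\sigma(i)|\le1$. Reduced forms: $B=(b_{ij})\in\mathcal H_n(\mathfrak o)$ with $\mathrm{ord}(b_{ii})\ge a_i$ and $\mathrm{ord}(2b_{ij})\ge(a_i+a_j)/2$ for $i<j$ is a reduced form of GK-type $(\underline a,\sigma)$, $\sigma$ an $\underline a$-admissible involution, if: (1) for $i\notin\mathcal P^0$, $\mathrm{ord}(2b_{i\sigma(i)})=(a_i+a_{\sigma(i)})/2$, and for $i\in\mathcal P^-$, $\mathrm{ord}(b_{ii})=a_i$; (2) for $i\in\mathcal P^0$, $\mathrm{ord}(b_{ii})=a_i$; (3) for $j\neq i,\sigma(i)$, $\mathrm{ord}(2b_{ij})>(a_i+a_j)/2$.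 *)

theory Defs
  imports Main "Jordan_Normal_Form.Determinant" "HOL-Library.Disjoint_Sets"
begin

text \<open>The normalized valuation is a function ordF :: 'a => int; its value at 0
  is irrelevant (ord 0 = +infinity is handled by explicit "x = 0 \<or> ..." clauses).\<close>

definition normalized_discrete_valuation :: "('a::field \<Rightarrow> int) \<Rightarrow> bool" where
  "normalized_discrete_valuation ordF \<longleftrightarrow>
     (\<forall>x y. x \<noteq> 0 \<longrightarrow> y \<noteq> 0 \<longrightarrow> ordF (x * y) = ordF x + ordF y) \<and>
     (\<forall>x y. x \<noteq> 0 \<longrightarrow> y \<noteq> 0 \<longrightarrow> x + y \<noteq> 0 \<longrightarrow> ordF (x + y) \<ge> min (ordF x) (ordF y)) \<and>
     (\<exists>p. p \<noteq> 0 \<and> ordF p = 1)"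

definition ord_ge :: "('a::field \<Rightarrow> int) \<Rightarrow> 'a \<Rightarrow> int \<Rightarrow> bool" where
  "ord_ge ordF x k \<longleftrightarrow> x = 0 \<or> ordF x \<ge> k"

definition valuation_complete :: "('a::field \<Rightarrow> int) \<Rightarrow> bool" where
  "valuation_complete ordF \<longleftrightarrow>
     (\<forall>s :: nat \<Rightarrow> 'a.
        (\<forall>N. \<exists>M. \<forall>m\<ge>M. \<forall>n\<ge>M. ord_ge ordF (s m - s n) N) \<longrightarrow>
        (\<exists>L. \<forall>N. \<exists>M. \<forall>n\<ge>M. ord_ge ordF (s n - L) N))"

definition int_ring :: "('a::field \<Rightarrow> int) \<Rightarrow> 'a set" where
  "int_ring ordF = {x. ord_ge ordF x 0}"

definition residue_field :: "('a::field \<Rightarrow> int) \<Rightarrow> 'a set set" where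
  "residue_field ordF = int_ring ordF // {(x, y). x \<in> int_ring ordF \<and> y \<in> int_ring ordF \<and> ord_ge ordF (x - y) 1}"

definition dyadic_local_field :: "('a::field_char_0 \<Rightarrow> int) \<Rightarrow> bool" where
  "dyadic_local_field ordF \<longleftrightarrow>
     normalized_discrete_valuation ordF \<and> valuation_complete ordF \<and>
     finite (residue_field ordF) \<and> even (card (residue_field ordF))"

definition H_int :: "('a::field \<Rightarrow> int) \<Rightarrow> nat \<Rightarrow> 'a mat \<Rightarrow> bool" where
  "H_int ordF n B \<longleftrightarrow> B \<in> carrier_mat n n \<and> B\<^sup>T = B \<and>
     (\<forall>i<n. ord_ge ordF (B $$ (i, i)) 0) \<and>
     (\<forall>i<n. \<forall>j<n. ord_ge ordF (2 * B $$ (i, j)) 0)"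

definition D_of :: "nat \<Rightarrow> 'a::field mat \<Rightarrow> 'a" where
  "D_of n B = (- 4) ^ (n div 2) * det B"

definition is_square :: "'a::field \<Rightarrow> bool" where
  "is_square x \<longleftrightarrow> (\<exists>y. x = y * y)"

text \<open>xi_B = 0: F(sqrt D)/F is a ramified quadratic extension, i.e. D is not a square
  and the ramification index of F(sqrt D)/F is 2.  The (unique) extension of ord to
  L = F(sqrt D) is w(a + b sqrt D) = ord(a^2 - D b^2)/2, so e = 2 iff some nonzero
  norm a^2 - D b^2 has odd valuation.\<close>
definition ramified_quadratic :: "('a::field \<Rightarrow> int) \<Rightarrow> 'a \<Rightarrow> bool" where
  "ramified_quadratic ordF D \<longleftrightarrow> \<not> is_square D \<and>
     (\<exists>x y. x * x - D * (y * y) \<noteq> 0 \<and> odd (ordF (x * x - D * (y * y))))"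

definition xi_zero :: "('a::field \<Rightarrow> int) \<Rightarrow> nat \<Rightarrow> 'a mat \<Rightarrow> bool" where
  "xi_zero ordF n B \<longleftrightarrow> ramified_quadratic ordF (D_of n B)"

section \<open>Admissible involutions (indices 0..n-1)\<close>

definition block :: "nat \<Rightarrow> (nat \<Rightarrow> nat) \<Rightarrow> nat \<Rightarrow> nat set" where
  "block n a i = {j. j < n \<and> a j = a i}"

definition P0 :: "nat \<Rightarrow> (nat \<Rightarrow> nat) \<Rightarrow> nat set" where
  "P0 n \<sigma> = {i. i < n \<and> \<sigma> i = i}"

definition Pplus :: "nat \<Rightarrow> (nat \<Rightarrow> nat) \<Rightarrow> (nat \<Rightarrow> nat) \<Rightarrow> nat set" where
  "Pplus n a \<sigma> = {i. i < n \<and> a i > a (\<sigma> i)}"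

definition Pminus :: "nat \<Rightarrow> (nat \<Rightarrow> nat) \<Rightarrow> (nat \<Rightarrow> nat) \<Rightarrow> nat set" where
  "Pminus n a \<sigma> = {i. i < n \<and> a i < a (\<sigma> i)}"

definition same_par :: "nat \<Rightarrow> nat \<Rightarrow> bool" where
  "same_par x y \<longleftrightarrow> x mod 2 = y mod 2"

definition admissible :: "nat \<Rightarrow> (nat \<Rightarrow> nat) \<Rightarrow> (nat \<Rightarrow> nat) \<Rightarrow> bool" where
  "admissible n a \<sigma> \<longleftrightarrow>
     \<sigma> permutes {..<n} \<and> (\<forall>i. \<sigma> (\<sigma> i) = i) \<and>
     \<comment> \<open>(i)\<close>
     card (P0 n \<sigma>) \<le> 2 \<and>
     (\<forall>i\<in>P0 n \<sigma>. \<forall>j\<in>P0 n \<sigma>. i \<noteq> j \<longrightarrow> \<not> same_par (a i) (a j)) \<and>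
     (\<forall>i\<in>P0 n \<sigma>. i = Max (block n a i) \<and>
        i = Max {j \<in> P0 n \<sigma> \<union> Pplus n a \<sigma>. same_par (a j) (a i)}) \<and>
     \<comment> \<open>(ii)\<close>
     (\<forall>i<n. card (block n a i \<inter> Pminus n a \<sigma>) \<le> 1) \<and>
     (\<forall>i\<in>Pminus n a \<sigma>. i = Max (block n a i) \<and>
        (let S = {j \<in> Pplus n a \<sigma>. j > i \<and> same_par (a j) (a i)} in
           \<sigma> i \<in> S \<and> (\<forall>j\<in>S. \<sigma> i \<le> j))) \<and>
     \<comment> \<open>(iii)\<close>
     (\<forall>i<n. card (block n a i \<inter> Pplus n a \<sigma>) \<le> 1) \<and>
     (\<forall>i\<in>Pplus n a \<sigma>. i = Min (block n a i) \<and>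
        (let S = {j \<in> Pminus n a \<sigma>. j < i \<and> same_par (a j) (a i)} in
           \<sigma> i \<in> S \<and> (\<forall>j\<in>S. j \<le> \<sigma> i))) \<and>
     \<comment> \<open>(iv)\<close>
     (\<forall>i<n. a i = a (\<sigma> i) \<longrightarrow> (i \<le> \<sigma> i + 1 \<and> \<sigma> i \<le> i + 1))"

definition reduced_form :: "('a::field \<Rightarrow> int) \<Rightarrow> nat \<Rightarrow> (nat \<Rightarrow> nat) \<Rightarrow> (nat \<Rightarrow> nat) \<Rightarrow> 'a mat \<Rightarrow> bool" where
  "reduced_form ordF n a \<sigma> B \<longleftrightarrow>
     H_int ordF n B \<and>
     (\<forall>i j. i < j \<longrightarrow> j < n \<longrightarrow> a i \<le> a j) \<and>
     admissible n a \<sigma> \<and>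
     (\<forall>i<n. ord_ge ordF (B $$ (i, i)) (int (a i))) \<and>
     (\<forall>i<n. \<forall>j<n. i < j \<longrightarrow>
        (2 * B $$ (i, j) = 0 \<or> 2 * ordF (2 * B $$ (i, j)) \<ge> int (a i) + int (a j))) \<and>
     \<comment> \<open>(1)\<close>
     (\<forall>i<n. i \<notin> P0 n \<sigma> \<longrightarrow> 2 * B $$ (i, \<sigma> i) \<noteq> 0 \<and>
        2 * ordF (2 * B $$ (i, \<sigma> i)) = int (a i) + int (a (\<sigma> i))) \<and>
     (\<forall>i\<in>Pminus n a \<sigma>. B $$ (i, i) \<noteq> 0 \<and> ordF (B $$ (i, i)) = int (a i)) \<and>
     \<comment> \<open>(2)\<close>
     (\<forall>i\<in>P0 n \<sigma>. B $$ (i, i) \<noteq> 0 \<and> ordF (B $$ (i, i)) = int (a i)) \<and>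
     \<comment> \<open>(3)\<close>
     (\<forall>i<n. \<forall>j<n. j \<noteq> i \<longrightarrow> j \<noteq> \<sigma> i \<longrightarrow>
        (2 * B $$ (i, j) = 0 \<or> 2 * ordF (2 * B $$ (i, j)) > int (a i) + int (a j)))"

end

theory Submission
  imports Defs
begin

(* The pairs {i, \<sigma> i} with \<sigma> i \<noteq> i are peeled off one at a time.  After a simultaneous
   permutation of rows and columns a pair occupies the last two indices, and the Schur complement
   of its 2x2 block [[p, q], [q, s]] satisfies the same valuation conditions on the remaining
   indices: since ord 2 \<ge> 1 and 2 ord (2q) = a k + a (k + 1), the discriminant satisfies
   -4 (p s - q^2) = (2q)^2 (1 + 4t) with t integral, and all correction terms stay strictly below
   the bounds (a i + a j)/2.  So det B = \<delta>_1 ... \<delta>_r det B_0, where B_0 is what remains on the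
   fixed points of \<sigma> and every -4 \<delta>_j lies in F^\<times>^2 (1 + 4 \<o>).

   The moved points pair up and there are at most two fixed points.  For odd n there is exactly
   one, i0, and ord (det B) \<equiv> ord (b i0 i0) mod 2 because every ord \<delta>_j is even.  For even n
   without fixed points D_B lies in F^\<times>^2 (1 + 4 \<o>); for such D every norm x^2 - D y^2 has even
   valuation (by Hensel's lemma for x^2 + x = t), so D is not ramified.  Hence a ramified D_B
   forces two fixed points, which have different parities by admissibility.

   ord 2 \<ge> 1 holds because the residue field has even cardinality: otherwise negation would pair
   off the nonzero residue classes. *)

lemma even_card_fixpoint_free_involution:
  assumes "finite A" and "\<forall>x\<in>A. h x \<in> A \<and> h (h x) = x \<and> h x \<noteq> x"
  shows "even (card A)"
  using assms
proof (induction "card A" arbitrary: A rule: less_induct)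
  case less
  show ?case
  proof (cases "A = {}")
    case False
    then obtain x where x: "x \<in> A"
      by blast
    define A' where "A' = A - {x, h x}"
    have pair: "{x, h x} \<subseteq> A" "card {x, h x} = 2"
      using x less.prems(2) by auto
    then have card: "card A = card A' + 2"
      using less.prems(1) card_mono[OF less.prems(1) pair(1)] card_Diff_subset[of "{x, h x}" A]
      by (simp add: A'_def)
    have "\<forall>y\<in>A'. h y \<in> A' \<and> h (h y) = y \<and> h y \<noteq> y"
      using less.prems(2) x by (auto simp: A'_def) metis+
    then have "even (card A')"
      using less.hyps[of A'] less.prems(1) card by (simp add: A'_def)
    then show ?thesis
      using card by simp
  qed simp
qed

lemma even_card_P0_iff:
  assumes "\<sigma> permutes {..<m}" and "\<forall>i. \<sigma> (\<sigma> i) = i"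
  shows "even (card (P0 m \<sigma>)) \<longleftrightarrow> even m"
proof -
  have "even (card ({..<m} - P0 m \<sigma>))"
    using assms permutes_in_image[OF assms(1)]
    by (intro even_card_fixpoint_free_involution[where h = \<sigma>]) (auto simp: P0_def)
  moreover have "P0 m \<sigma> \<subseteq> {..<m}"
    by (auto simp: P0_def)
  ultimately have "even (m - card (P0 m \<sigma>))" and "card (P0 m \<sigma>) \<le> m"
    using card_mono[of "{..<m}" "P0 m \<sigma>"] by (simp_all add: card_Diff_subset finite_subset)
  then show ?thesis
    by (auto simp: even_diff_nat)
qed

lemma permutes_pair_exists:
  assumes "i \<in> S" "j \<in> S" "k \<in> S" "l \<in> S" "i \<noteq> j" "k \<noteq> l"
  obtains \<rho> where "\<rho> permutes S" "\<rho> k = i" "\<rho> l = j"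
proof
  define j' where "j' = transpose i k j"
  show "(transpose i k \<circ> transpose j' l) permutes S"
    using assms by (intro permutes_compose permutes_swap_id) (auto simp: j'_def transpose_def)
  show "(transpose i k \<circ> transpose j' l) k = i" and "(transpose i k \<circ> transpose j' l) l = j"
    using assms by (auto simp: j'_def transpose_def)
qed

section \<open>Discrete valuations\<close>

locale discrete_valuation =
  fixes v :: "'a::field \<Rightarrow> int"
  assumes normalized: "normalized_discrete_valuation v"
begin

lemma val_mult: "x \<noteq> 0 \<Longrightarrow> y \<noteq> 0 \<Longrightarrow> v (x * y) = v x + v y"
  using normalized unfolding normalized_discrete_valuation_def by blast

lemma val_add: "x \<noteq> 0 \<Longrightarrow> y \<noteq> 0 \<Longrightarrow> x + y \<noteq> 0 \<Longrightarrow> min (v x) (v y) \<le> v (x + y)"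
  using normalized unfolding normalized_discrete_valuation_def by blast

lemma val_one [simp]: "v 1 = 0"
  using val_mult[of 1 1] by simp

lemma val_minus [simp]: "v (- x) = v x"
proof -
  have "v (-1) = 0"
    using val_mult[of "-1" "-1"] by simp
  then show ?thesis
    using val_mult[of "-1" x] by (cases "x = 0") simp_all
qed

lemma val_divide: "x \<noteq> 0 \<Longrightarrow> y \<noteq> 0 \<Longrightarrow> v (x / y) = v x - v y"
  using val_mult[of x "inverse y"] val_mult[of y "inverse y"] by (simp add: divide_inverse)

lemma val_square: "x \<noteq> 0 \<Longrightarrow> v (x * x) = 2 * v x"
  by (simp add: val_mult)

lemma ord_ge_0 [simp]: "ord_ge v 0 k"
  by (simp add: ord_ge_def)

lemma ord_ge_mono: "ord_ge v x k \<Longrightarrow> l \<le> k \<Longrightarrow> ord_ge v x l"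
  unfolding ord_ge_def by auto

lemma ord_ge_add: "ord_ge v x k \<Longrightarrow> ord_ge v y k \<Longrightarrow> ord_ge v (x + y) k"
  unfolding ord_ge_def using val_add[of x y] by fastforce

lemma ord_ge_minus: "ord_ge v (- x) k \<longleftrightarrow> ord_ge v x k"
  by (simp add: ord_ge_def)

lemma ord_ge_diff: "ord_ge v x k \<Longrightarrow> ord_ge v y k \<Longrightarrow> ord_ge v (x - y) k"
  using ord_ge_add[of x k "- y"] by (simp add: ord_ge_minus)

lemma ord_ge_mult: "ord_ge v x k \<Longrightarrow> ord_ge v y l \<Longrightarrow> ord_ge v (x * y) (k + l)"
  unfolding ord_ge_def by (cases "x = 0"; cases "y = 0") (auto simp: val_mult)

lemma val_add_dominant:
  assumes "x \<noteq> 0" and "ord_ge v y (v x + 1)"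
  shows "x + y \<noteq> 0 \<and> v (x + y) = v x"
proof (cases "y = 0")
  case False
  with assms have less: "v x < v y"
    by (simp add: ord_ge_def)
  then have nonzero: "x + y \<noteq> 0"
    using add_eq_0_iff[of x y] by fastforce
  have "min (v x) (v y) \<le> v (x + y)"
    using val_add[OF assms(1) False nonzero] .
  moreover have "min (v (x + y)) (v (- y)) \<le> v x"
    using val_add[of "x + y" "- y"] nonzero False assms(1) by simp
  ultimately show ?thesis
    using less nonzero by auto
qed (use assms in simp)

lemma val_add_neq:
  assumes "x \<noteq> 0" and "y \<noteq> 0" and "v x \<noteq> v y"
  shows "x + y \<noteq> 0 \<and> v (x + y) = min (v x) (v y)"
proof (cases "v x < v y")
  case True
  then show ?thesis
    using val_add_dominant[of x y] assms by (simp add: ord_ge_def)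
next
  case False
  then show ?thesis
    using val_add_dominant[of y x] assms by (simp add: ord_ge_def add.commute)
qed

lemma val_one_plus: "ord_ge v y 1 \<Longrightarrow> 1 + y \<noteq> 0 \<and> v (1 + y) = 0"
  using val_add_dominant[of 1 y] by simp

(* ord x \<ge> r/2 and ord x > r/2: the bounds (a i + a j)/2 of a reduced form are half-integers. *)

definition ord_ge_half :: "'a \<Rightarrow> int \<Rightarrow> bool" where
  "ord_ge_half x r \<longleftrightarrow> x = 0 \<or> r \<le> 2 * v x"

definition ord_gt_half :: "'a \<Rightarrow> int \<Rightarrow> bool" where
  "ord_gt_half x r \<longleftrightarrow> x = 0 \<or> r < 2 * v x"

lemma ord_ge_half_double: "ord_ge_half x (2 * k) \<longleftrightarrow> ord_ge v x k"
  by (auto simp: ord_ge_half_def ord_ge_def)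

lemma ord_gt_half_imp_ge: "ord_gt_half x r \<Longrightarrow> ord_ge_half x r"
  by (auto simp: ord_ge_half_def ord_gt_half_def)

lemma ord_gt_half_mono: "ord_gt_half x r \<Longrightarrow> s \<le> r \<Longrightarrow> ord_gt_half x s"
  by (auto simp: ord_gt_half_def)

lemma ord_gt_half_mult: "ord_gt_half x r \<Longrightarrow> ord_ge_half y s \<Longrightarrow> ord_gt_half (x * y) (r + s)"
  by (cases "x = 0"; cases "y = 0") (auto simp: ord_ge_half_def ord_gt_half_def val_mult)

lemma ord_gt_half_add: "ord_gt_half x r \<Longrightarrow> ord_gt_half y r \<Longrightarrow> ord_gt_half (x + y) r"
  unfolding ord_gt_half_def using val_add[of x y] by fastforce

lemma ord_gt_half_minus: "ord_gt_half (- x) r \<longleftrightarrow> ord_gt_half x r"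
  by (simp add: ord_gt_half_def)

lemma ord_gt_half_diff: "ord_gt_half x r \<Longrightarrow> ord_gt_half y r \<Longrightarrow> ord_gt_half (x - y) r"
  using ord_gt_half_add[of x r "- y"] by (simp add: ord_gt_half_minus)

lemma ord_gt_half_divide: "y \<noteq> 0 \<Longrightarrow> ord_gt_half x r \<Longrightarrow> ord_gt_half (x / y) (r - 2 * v y)"
  by (cases "x = 0") (auto simp: ord_gt_half_def val_divide)

lemma val_add_dominant_half:
  "x \<noteq> 0 \<Longrightarrow> ord_gt_half y (2 * v x) \<Longrightarrow> x + y \<noteq> 0 \<and> v (x + y) = v x"
  using val_add_dominant[of x y] unfolding ord_gt_half_def ord_ge_def by fastforce

end

context discrete_valuation
begin

definition residue_rel :: "('a \<times> 'a) set" where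
  "residue_rel = {(x, y). x \<in> int_ring v \<and> y \<in> int_ring v \<and> ord_ge v (x - y) 1}"

lemma residue_field_quotient: "residue_field v = int_ring v // residue_rel"
  by (simp add: residue_field_def residue_rel_def)

lemma equiv_residue_rel: "equiv (int_ring v) residue_rel"
proof (rule equivI)
  show "refl_on (int_ring v) residue_rel"
    by (auto simp: refl_on_def residue_rel_def)
  show "sym residue_rel"
    using ord_ge_minus[of "_ - _" 1] by (auto intro!: symI simp: residue_rel_def)
  show "trans residue_rel"
    using ord_ge_add[of "_ - _" 1 "_ - _"] by (fastforce intro!: transI simp: residue_rel_def)
qed (auto simp: residue_rel_def)

lemma int_ring_uminus: "x \<in> int_ring v \<Longrightarrow> - x \<in> int_ring v"
  by (simp add: int_ring_def ord_ge_minus)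

lemma uminus_residue_class:
  assumes "x \<in> int_ring v"
  shows "uminus ` (residue_rel `` {x}) = residue_rel `` {- x}"
proof -
  have "(x, - y) \<in> residue_rel \<longleftrightarrow> (- x, y) \<in> residue_rel" for y
    using assms int_ring_uminus[of x] int_ring_uminus[of y] int_ring_uminus[of "- y"]
      ord_ge_minus[of "x + y" 1]
    by (auto simp: residue_rel_def algebra_simps)
  moreover have "y \<in> uminus ` (residue_rel `` {x}) \<longleftrightarrow> (x, - y) \<in> residue_rel" for y
    using image_eqI[of y uminus "- y"] by auto
  ultimately show ?thesis
    by (simp add: set_eq_iff)
qed

lemma uminus_residue_class_fixed:
  assumes v2: "v 2 = 0" and two: "(2::'a) \<noteq> 0" and x: "x \<in> int_ring v"
    and fixed: "residue_rel `` {- x} = residue_rel `` {x}"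
  shows "residue_rel `` {x} = residue_rel `` {0}"
proof -
  have "(- x, x) \<in> residue_rel"
    using eq_equiv_class_iff[OF equiv_residue_rel int_ring_uminus[OF x] x] fixed by simp
  then have "ord_ge v (2 * x) 1"
    using ord_ge_minus[of "- x - x" 1] by (simp add: residue_rel_def)
  then have "ord_ge v x 1"
    using v2 two val_mult[of 2 x] by (cases "x = 0") (simp_all add: ord_ge_def)
  then have "(x, 0) \<in> residue_rel"
    using x by (simp add: residue_rel_def int_ring_def)
  then show ?thesis
    by (rule equiv_class_eq[OF equiv_residue_rel])
qed

lemma val_two_pos_if_even_residue_field:
  assumes two: "(2::'a) \<noteq> 0" and finite: "finite (residue_field v)"
    and even: "even (card (residue_field v))"
  shows "1 \<le> v 2"
proof (rule ccontr)
  assume "\<not> 1 \<le> v 2"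
  moreover have "0 \<le> v 2"
    using val_add[of 1 1] two by simp
  ultimately have v2: "v 2 = 0"
    by simp
  define zero where "zero = residue_rel `` {0}"
  have int0: "0 \<in> int_ring v"
    by (simp add: int_ring_def)
  have zero_class: "zero \<in> residue_field v"
    unfolding zero_def residue_field_quotient using int0 by (rule quotientI)
  have "uminus ` zero = zero"
    using uminus_residue_class[OF int0] by (simp add: zero_def)
  have "uminus ` X \<in> residue_field v - {zero} \<and> uminus ` uminus ` X = X \<and> uminus ` X \<noteq> X"
    if X: "X \<in> residue_field v - {zero}" for X
  proof -
    obtain x where x: "x \<in> int_ring v" and X_eq: "X = residue_rel `` {x}"
      using X unfolding residue_field_quotient by (auto elim: quotientE)
    have neg: "uminus ` X = residue_rel `` {- x}"
      using uminus_residue_class[OF x] by (simp add: X_eq)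
    have "uminus ` X \<noteq> X"
      using uminus_residue_class_fixed[OF v2 two x] X X_eq neg by (auto simp: zero_def)
    moreover have "uminus ` X \<in> residue_field v"
      unfolding neg residue_field_quotient using int_ring_uminus[OF x] by (rule quotientI)
    moreover have "uminus ` X \<noteq> zero"
    proof
      assume "uminus ` X = zero"
      then have "X = uminus ` zero"
        by (auto simp: image_image)
      with X \<open>uminus ` zero = zero\<close> show False
        by simp
    qed
    ultimately show ?thesis
      by (simp add: image_image)
  qed
  then have "even (card (residue_field v - {zero}))"
    using finite by (intro even_card_fixpoint_free_involution[where h = "image uminus"]) simp_all
  moreover have "card (residue_field v) = Suc (card (residue_field v - {zero}))"
    using finite zero_class by (rule card_Suc_Diff1[symmetric])
  ultimately show False
    using even by simp
qed

end

section \<open>Schur complements\<close>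

lemma det_four_block_mat_schur_complement:
  fixes A :: "'a::idom mat"
  assumes A: "A \<in> carrier_mat n n" and X: "X \<in> carrier_mat n m" and Y: "Y \<in> carrier_mat m n"
    and H: "H \<in> carrier_mat m m" and Hi: "Hi \<in> carrier_mat m m" and inv: "Hi * H = 1\<^sub>m m"
  shows "det (four_block_mat A X Y H) = det H * det (A - X * Hi * Y)"
proof -
  define M where "M = four_block_mat (1\<^sub>m n) (- (X * Hi)) (0\<^sub>m m n) (1\<^sub>m m)"
  have XHi: "- (X * Hi) \<in> carrier_mat n m"
    using X Hi by simp
  have M: "M \<in> carrier_mat (n + m) (n + m)"
    unfolding M_def by simp
  have "det M = 1"
    unfolding M_def using XHi by (subst det_four_block_mat_lower_left_zero[of _ n _ m]) auto
  have "- (X * Hi) * H = - X"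
    using X Hi H inv by (simp add: assoc_mult_mat[of X n m Hi m H m])
  then have blocks: "M * four_block_mat A X Y H = four_block_mat (A - X * Hi * Y) (0\<^sub>m n m) Y H"
    unfolding M_def using A X Y H Hi XHi
    by (subst mult_four_block_mat[OF one_carrier_mat XHi zero_carrier_mat one_carrier_mat A X Y H])
      (auto simp: minus_add_uminus_mat[of A n n] intro!: eq_matI)
  have "det (four_block_mat A X Y H) = det (M * four_block_mat A X Y H)"
    using det_mult[OF M, of "four_block_mat A X Y H"] A X Y H \<open>det M = 1\<close> by simp
  also have "\<dots> = det (A - X * Hi * Y) * det H"
    unfolding blocks using A X Y H Hi by (intro det_four_block_mat_upper_right_zero) auto
  finally show ?thesis
    by (simp add: mult.commute)
qed

lemma det_2x2: "det (mat 2 2 f) = f (0, 0) * f (1, 1) - f (0, 1) * (f (1, 0) :: 'a::comm_ring_1)"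
proof -
  have "det (mat 2 2 f) = (\<Sum>j<2. mat 2 2 f $$ (0, j) * cofactor (mat 2 2 f) 0 j)"
    by (rule laplace_expansion_row[of _ 2]) auto
  then show ?thesis
    by (simp add: numeral_2_eq_2 cofactor_def mat_delete_def det_single)
qed

(* The bilinear form (x, y) H\<^sup>-\<^sup>1 (x', y') of the inverse of H = [[p, q], [q, s]]. *)
definition pair_correction :: "'a::field \<Rightarrow> 'a \<Rightarrow> 'a \<Rightarrow> 'a \<Rightarrow> 'a \<Rightarrow> 'a \<Rightarrow> 'a \<Rightarrow> 'a" where
  "pair_correction p q s x y x' y' = (x * (s * x' - q * y') + y * (p * y' - q * x')) / (p * s - q * q)"

lemma pair_correction_sym: "pair_correction p q s x y x' y' = pair_correction p q s x' y' x y"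
  unfolding pair_correction_def by (simp add: algebra_simps)

definition pair_complement :: "'a::field mat \<Rightarrow> nat \<Rightarrow> 'a mat" where
  "pair_complement C k = mat k k (\<lambda>(x, y). C $$ (x, y) -
     pair_correction (C $$ (k, k)) (C $$ (k, k + 1)) (C $$ (k + 1, k + 1))
       (C $$ (x, k)) (C $$ (x, k + 1)) (C $$ (y, k)) (C $$ (y, k + 1)))"

lemma det_pair_complement:
  fixes C :: "'a::field mat"
  assumes C: "C \<in> carrier_mat (k + 2) (k + 2)"
    and sym: "\<forall>i<k + 2. \<forall>j<k + 2. C $$ (i, j) = C $$ (j, i)"
    and nonsingular: "C $$ (k, k) * C $$ (k + 1, k + 1) - C $$ (k, k + 1) * C $$ (k, k + 1) \<noteq> 0"
  shows "det C = (C $$ (k, k) * C $$ (k + 1, k + 1) - C $$ (k, k + 1) * C $$ (k, k + 1))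
    * det (pair_complement C k)"
proof -
  define p q s where "p = C $$ (k, k)" and "q = C $$ (k, k + 1)" and "s = C $$ (k + 1, k + 1)"
  define \<delta> where "\<delta> = p * s - q * q"
  have q': "C $$ (k + 1, k) = q"
    using sym q_def by simp
  define A where "A = mat k k (\<lambda>(i, j). C $$ (i, j))"
  define X where "X = mat k 2 (\<lambda>(i, j). C $$ (i, k + j))"
  define Y where "Y = mat 2 k (\<lambda>(i, j). C $$ (k + i, j))"
  define H where "H = mat 2 2 (\<lambda>(i, j). C $$ (k + i, k + j))"
  define Hi where "Hi = mat 2 2 (\<lambda>(i, j). (if i = j then (if i = 0 then s else p) else - q) / \<delta>)"
  have blocks: "C = four_block_mat A X Y H"
    using C by (auto simp: A_def X_def Y_def H_def intro!: eq_matI)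
  have "\<delta> \<noteq> 0"
    using nonsingular by (simp add: \<delta>_def p_def q_def s_def)
  have H: "H = mat 2 2 (\<lambda>(i, j). if i = j then (if i = 0 then p else s) else q)"
    using q' by (auto simp: H_def p_def q_def s_def numeral_2_eq_2 less_Suc_eq intro!: eq_matI)
  have inverse: "Hi * H = 1\<^sub>m 2"
    using \<open>\<delta> \<noteq> 0\<close> unfolding H
    by (auto simp: Hi_def scalar_prod_def numeral_2_eq_2 less_Suc_eq \<delta>_def algebra_simps
        add_divide_distrib[symmetric] diff_divide_distrib[symmetric] intro!: eq_matI)
  have "det C = det H * det (A - X * Hi * Y)"
    unfolding blocks
    by (rule det_four_block_mat_schur_complement[OF _ _ _ _ _ inverse])
      (auto simp: A_def X_def Y_def H_def Hi_def)
  also have "det H = \<delta>"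
    unfolding H det_2x2 \<delta>_def by simp
  also have "A - X * Hi * Y = pair_complement C k"
    using sym by (auto simp: pair_complement_def pair_correction_def A_def X_def Y_def Hi_def
        scalar_prod_def numeral_2_eq_2 p_def q_def s_def \<delta>_def algebra_simps
        add_divide_distrib[symmetric] diff_divide_distrib[symmetric] intro!: eq_matI)
  finally show ?thesis
    by (simp add: \<delta>_def p_def q_def s_def)
qed

lemma det_permute_rows_cols:
  fixes A :: "'a::comm_ring_1 mat"
  assumes A: "A \<in> carrier_mat n n" and p: "p permutes {..<n}"
  shows "det (mat n n (\<lambda>(i, j). A $$ (p i, p j))) = det A"
proof -
  have p': "p permutes {0..<n}"
    using p by (simp add: atLeast0LessThan)
  have image: "p i < n" if "i < n" for i
    using p that by (auto dest: permutes_in_image)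
  define A1 where "A1 = mat n n (\<lambda>(i, j). A $$ (i, p j))"
  have A1: "A1 \<in> carrier_mat n n"
    by (simp add: A1_def)
  have "mat n n (\<lambda>(i, j). A $$ (p i, p j)) = mat n n (\<lambda>(i, j). A1 $$ (p i, j))"
    by (auto simp: A1_def image intro!: eq_matI)
  then have rows: "det (mat n n (\<lambda>(i, j). A $$ (p i, p j))) = signof p * det A1"
    using det_permute_rows[OF A1 p'] by simp
  have "transpose_mat A1 = mat n n (\<lambda>(i, j). transpose_mat A $$ (p i, j))"
    using A by (auto simp: A1_def image intro!: eq_matI)
  then have "det (transpose_mat A1) = signof p * det (transpose_mat A)"
    using det_permute_rows[of "transpose_mat A" n p] A p' by simp
  then have cols: "det A1 = signof p * det A"
    using det_transpose[OF A1] det_transpose[OF A] by simp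
  have "signof p * signof p = (1::'a)"
    by (metis of_int_1 of_int_mult sign_idempotent)
  then show ?thesis
    using rows cols by (simp add: mult.assoc[symmetric])
qed

locale dyadic_valuation = discrete_valuation v for v :: "'a::field_char_0 \<Rightarrow> int" +
  assumes val_two: "1 \<le> v 2"
begin

lemma val_four: "v 4 = 2 * v 2"
  using val_mult[of 2 2] by simp

lemma unit_one_plus_four: "ord_ge v t 0 \<Longrightarrow> 1 + 4 * t \<noteq> 0 \<and> v (1 + 4 * t) = 0"
  using ord_ge_mult[of 4 1 t 0] val_four val_two
  by (intro val_one_plus) (simp add: ord_ge_def)

(* The square class F\<^sup>\<times>\<^sup>2 (1 + 4 \<o>) of discriminants with trivial or unramified square root. *)
definition sq_class_1_plus_4o :: "'a \<Rightarrow> bool" where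
  "sq_class_1_plus_4o x \<longleftrightarrow> (\<exists>c t. c \<noteq> 0 \<and> ord_ge v t 0 \<and> x = c * c * (1 + 4 * t))"

lemma sq_class_1_plus_4o_mult:
  assumes "sq_class_1_plus_4o x" and "sq_class_1_plus_4o y"
  shows "sq_class_1_plus_4o (x * y)"
proof -
  obtain c t d u where c: "c \<noteq> 0" "ord_ge v t 0" "x = c * c * (1 + 4 * t)"
    and d: "d \<noteq> 0" "ord_ge v u 0" "y = d * d * (1 + 4 * u)"
    using assms unfolding sq_class_1_plus_4o_def by blast
  have "ord_ge v (4 * t * u) 0"
    using ord_ge_mult[OF ord_ge_mult[of 4 0 t 0] d(2)] c(2) val_four val_two
    by (simp add: ord_ge_def)
  then have "ord_ge v (t + u + 4 * t * u) 0"
    by (intro ord_ge_add c(2) d(2))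
  moreover have "x * y = (c * d) * (c * d) * (1 + 4 * (t + u + 4 * t * u))"
    unfolding c(3) d(3) by (simp add: algebra_simps)
  ultimately show ?thesis
    using c(1) d(1) unfolding sq_class_1_plus_4o_def by (metis mult_eq_0_iff)
qed

lemma sq_class_1_plus_4o_val:
  assumes "sq_class_1_plus_4o x"
  shows "x \<noteq> 0 \<and> even (v x)"
proof -
  obtain c t where "c \<noteq> 0" "ord_ge v t 0" "x = c * c * (1 + 4 * t)"
    using assms unfolding sq_class_1_plus_4o_def by blast
  then show ?thesis
    using unit_one_plus_four val_mult[of "c * c" "1 + 4 * t"] by (simp add: val_square)
qed

lemma pair_discriminant:
  assumes q: "2 * q \<noteq> 0" "2 * v (2 * q) = k + l" and p: "ord_ge v p k" and s: "ord_ge v s l"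
  shows "\<exists>t. ord_ge v t 0 \<and> - 4 * (p * s - q * q) = (2 * q) * (2 * q) * (1 + 4 * t)"
proof -
  define t where "t = - (p * s) / ((2 * q) * (2 * q))"
  have "v ((2 * q) * (2 * q)) = k + l"
    using q val_square[of "2 * q"] by simp
  moreover have "ord_ge v (- (p * s)) (k + l)"
    using ord_ge_mult[OF p s] by (simp add: ord_ge_minus)
  ultimately have "ord_ge v t 0"
    unfolding t_def using q(1) by (cases "p * s = 0") (simp_all add: ord_ge_def val_divide)
  moreover have "- 4 * (p * s - q * q) = (2 * q) * (2 * q) * (1 + 4 * t)"
    using q(1) by (simp add: t_def field_simps)
  ultimately show ?thesis
    by blast
qed

lemma pair_discriminant_val:
  assumes q: "2 * q \<noteq> 0" "2 * v (2 * q) = k + l" and p: "ord_ge v p k" and s: "ord_ge v s l"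
  shows "4 * (p * s - q * q) \<noteq> 0 \<and> 2 * v (4 * (p * s - q * q)) = 2 * (k + l)"
proof -
  obtain t where t: "ord_ge v t 0" and \<delta>: "- 4 * (p * s - q * q) = (2 * q) * (2 * q) * (1 + 4 * t)"
    using pair_discriminant[OF q p s] by blast
  have "(2 * q) * (2 * q) * (1 + 4 * t) \<noteq> 0 \<and> v ((2 * q) * (2 * q) * (1 + 4 * t)) = k + l"
    using q unit_one_plus_four[OF t] val_mult[of "(2 * q) * (2 * q)" "1 + 4 * t"] val_square[of "2 * q"]
    by simp
  then show ?thesis
    using val_minus[of "4 * (p * s - q * q)"] unfolding \<delta>[symmetric] by auto
qed

lemma pair_correction_bound:
  assumes q: "2 * q \<noteq> 0" "2 * v (2 * q) = k + l" and p: "ord_ge v p k" and s: "ord_ge v s l"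
    and x: "ord_gt_half (2 * x) (\<alpha> + k)" and x': "ord_gt_half (2 * x') (\<beta> + k)"
    and y: "ord_gt_half (2 * y) (\<alpha> + l)" and y': "ord_gt_half (2 * y') (\<beta> + l)"
  shows "ord_gt_half (2 * pair_correction p q s x y x' y') (\<alpha> + \<beta>)"
proof -
  have \<delta>: "4 * (p * s - q * q) \<noteq> 0" "2 * v (4 * (p * s - q * q)) = 2 * (k + l)"
    using pair_discriminant_val[OF q p s] by simp_all
  have Q: "ord_ge_half (2 * q) (k + l)" and two: "ord_ge_half 2 0"
    using q val_two by (simp_all add: ord_ge_half_def)
  have p2: "ord_ge_half p (2 * k)" and s2: "ord_ge_half s (2 * l)"
    using p s by (simp_all add: ord_ge_half_double)
  define R where "R = \<alpha> + \<beta> + 2 * (k + l)"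
  define N where "N = (2 * x) * (2 * x') * s * 2 - (2 * x) * (2 * y') * (2 * q)
    - (2 * x') * (2 * y) * (2 * q) + (2 * y) * (2 * y') * p * 2"
  have "ord_gt_half ((2 * x) * (2 * x') * s * 2) R"
    by (rule ord_gt_half_mono[OF ord_gt_half_mult[OF ord_gt_half_mult[OF
          ord_gt_half_mult[OF x ord_gt_half_imp_ge[OF x']] s2] two]]) (simp add: R_def)
  moreover have "ord_gt_half ((2 * x) * (2 * y') * (2 * q)) R"
    by (rule ord_gt_half_mono[OF ord_gt_half_mult[OF
          ord_gt_half_mult[OF x ord_gt_half_imp_ge[OF y']] Q]]) (simp add: R_def)
  moreover have "ord_gt_half ((2 * x') * (2 * y) * (2 * q)) R"
    by (rule ord_gt_half_mono[OF ord_gt_half_mult[OF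
          ord_gt_half_mult[OF x' ord_gt_half_imp_ge[OF y]] Q]]) (simp add: R_def)
  moreover have "ord_gt_half ((2 * y) * (2 * y') * p * 2) R"
    by (rule ord_gt_half_mono[OF ord_gt_half_mult[OF ord_gt_half_mult[OF
          ord_gt_half_mult[OF y ord_gt_half_imp_ge[OF y']] p2] two]]) (simp add: R_def)
  ultimately have "ord_gt_half N R"
    unfolding N_def by (intro ord_gt_half_add ord_gt_half_diff)
  moreover have "2 * pair_correction p q s x y x' y' = N / (4 * (p * s - q * q))"
    using \<delta>(1) unfolding pair_correction_def N_def by (simp add: field_simps)
  ultimately show ?thesis
    using ord_gt_half_divide[OF \<delta>(1), of N R] \<delta>(2) by (simp add: R_def)
qed

(* Sharper on the diagonal, where the cross term of the quadratic form carries a factor 2. *)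
lemma pair_correction_diag_bound:
  assumes q: "2 * q \<noteq> 0" "2 * v (2 * q) = k + l" and p: "ord_ge v p k" and s: "ord_ge v s l"
    and x: "ord_gt_half (2 * x) (\<alpha> + k)" and y: "ord_gt_half (2 * y) (\<alpha> + l)"
  shows "ord_gt_half (pair_correction p q s x y x y) (2 * \<alpha>)"
proof -
  have \<delta>: "4 * (p * s - q * q) \<noteq> 0" "2 * v (4 * (p * s - q * q)) = 2 * (k + l)"
    using pair_discriminant_val[OF q p s] by simp_all
  have Q: "ord_ge_half (2 * q) (k + l)"
    using q by (simp add: ord_ge_half_def)
  have p2: "ord_ge_half p (2 * k)" and s2: "ord_ge_half s (2 * l)"
    using p s by (simp_all add: ord_ge_half_double)
  define R where "R = 2 * \<alpha> + 2 * (k + l)"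
  define N where "N = (2 * x) * (2 * x) * s - (2 * x) * (2 * y) * (2 * q) + (2 * y) * (2 * y) * p"
  have "ord_gt_half ((2 * x) * (2 * x) * s) R"
    by (rule ord_gt_half_mono[OF ord_gt_half_mult[OF
          ord_gt_half_mult[OF x ord_gt_half_imp_ge[OF x]] s2]]) (simp add: R_def)
  moreover have "ord_gt_half ((2 * x) * (2 * y) * (2 * q)) R"
    by (rule ord_gt_half_mono[OF ord_gt_half_mult[OF
          ord_gt_half_mult[OF x ord_gt_half_imp_ge[OF y]] Q]]) (simp add: R_def)
  moreover have "ord_gt_half ((2 * y) * (2 * y) * p) R"
    by (rule ord_gt_half_mono[OF ord_gt_half_mult[OF
          ord_gt_half_mult[OF y ord_gt_half_imp_ge[OF y]] p2]]) (simp add: R_def)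
  ultimately have "ord_gt_half N R"
    unfolding N_def by (intro ord_gt_half_add ord_gt_half_diff)
  moreover have "pair_correction p q s x y x y = N / (4 * (p * s - q * q))"
    using \<delta>(1) unfolding pair_correction_def N_def by (simp add: field_simps)
  ultimately show ?thesis
    using ord_gt_half_divide[OF \<delta>(1), of N R] \<delta>(2) by (simp add: R_def)
qed

end

section \<open>Quasi-reduced forms\<close>

context discrete_valuation
begin

(* Conditions (1)-(3) of a reduced form, without admissibility of \<sigma> and monotonicity of a.
   Unlike reduced forms, this class survives reordering and Schur complements of pairs {i, \<sigma> i}. *)
definition quasi_reduced :: "nat \<Rightarrow> (nat \<Rightarrow> int) \<Rightarrow> (nat \<Rightarrow> nat) \<Rightarrow> 'a mat \<Rightarrow> bool" where
  "quasi_reduced m a \<sigma> C \<longleftrightarrow> C \<in> carrier_mat m m \<and> \<sigma> permutes {..<m} \<and> (\<forall>i. \<sigma> (\<sigma> i) = i) \<and>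
     (\<forall>i<m. \<forall>j<m. C $$ (i, j) = C $$ (j, i)) \<and>
     (\<forall>i<m. ord_ge v (C $$ (i, i)) (a i)) \<and>
     (\<forall>i<m. \<forall>j<m. i \<noteq> j \<longrightarrow> j \<noteq> \<sigma> i \<longrightarrow> ord_gt_half (2 * C $$ (i, j)) (a i + a j)) \<and>
     (\<forall>i<m. \<sigma> i \<noteq> i \<longrightarrow> 2 * C $$ (i, \<sigma> i) \<noteq> 0 \<and> 2 * v (2 * C $$ (i, \<sigma> i)) = a i + a (\<sigma> i)) \<and>
     (\<forall>i<m. \<sigma> i = i \<longrightarrow> C $$ (i, i) \<noteq> 0 \<and> v (C $$ (i, i)) = a i)"

lemma quasi_reducedD:
  assumes "quasi_reduced m a \<sigma> C"
  shows quasi_reduced_carrier: "C \<in> carrier_mat m m"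
    and quasi_reduced_permutes: "\<sigma> permutes {..<m}"
    and quasi_reduced_involution: "\<sigma> (\<sigma> i) = i"
    and quasi_reduced_sym: "i < m \<Longrightarrow> j < m \<Longrightarrow> C $$ (i, j) = C $$ (j, i)"
    and quasi_reduced_diag: "i < m \<Longrightarrow> ord_ge v (C $$ (i, i)) (a i)"
    and quasi_reduced_off: "i < m \<Longrightarrow> j < m \<Longrightarrow> i \<noteq> j \<Longrightarrow> j \<noteq> \<sigma> i \<Longrightarrow>
      ord_gt_half (2 * C $$ (i, j)) (a i + a j)"
    and quasi_reduced_moved: "i < m \<Longrightarrow> \<sigma> i \<noteq> i \<Longrightarrow>
      2 * C $$ (i, \<sigma> i) \<noteq> 0 \<and> 2 * v (2 * C $$ (i, \<sigma> i)) = a i + a (\<sigma> i)"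
    and quasi_reduced_fixed: "i < m \<Longrightarrow> \<sigma> i = i \<Longrightarrow> C $$ (i, i) \<noteq> 0 \<and> v (C $$ (i, i)) = a i"
  using assms unfolding quasi_reduced_def by blast+

lemma quasi_reducedI:
  assumes "C \<in> carrier_mat m m" and "\<sigma> permutes {..<m}" and "\<And>i. \<sigma> (\<sigma> i) = i"
    and "\<And>i j. i < m \<Longrightarrow> j < m \<Longrightarrow> C $$ (i, j) = C $$ (j, i)"
    and "\<And>i. i < m \<Longrightarrow> ord_ge v (C $$ (i, i)) (a i)"
    and "\<And>i j. i < m \<Longrightarrow> j < m \<Longrightarrow> i \<noteq> j \<Longrightarrow> j \<noteq> \<sigma> i \<Longrightarrow>
      ord_gt_half (2 * C $$ (i, j)) (a i + a j)"
    and "\<And>i. i < m \<Longrightarrow> \<sigma> i \<noteq> i \<Longrightarrow>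
      2 * C $$ (i, \<sigma> i) \<noteq> 0 \<and> 2 * v (2 * C $$ (i, \<sigma> i)) = a i + a (\<sigma> i)"
    and "\<And>i. i < m \<Longrightarrow> \<sigma> i = i \<Longrightarrow> C $$ (i, i) \<noteq> 0 \<and> v (C $$ (i, i)) = a i"
  shows "quasi_reduced m a \<sigma> C"
  using assms unfolding quasi_reduced_def by blast

lemma quasi_reduced_permute:
  assumes C: "quasi_reduced m a \<sigma> C" and \<rho>: "\<rho> permutes {..<m}"
  shows "quasi_reduced m (a \<circ> \<rho>) (inv_into UNIV \<rho> \<circ> \<sigma> \<circ> \<rho>) (mat m m (\<lambda>(x, y). C $$ (\<rho> x, \<rho> y)))"
proof -
  define \<sigma>' where "\<sigma>' = inv_into UNIV \<rho> \<circ> \<sigma> \<circ> \<rho>"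
  define C' where "C' = mat m m (\<lambda>(x, y). C $$ (\<rho> x, \<rho> y))"
  have \<rho>_less: "\<rho> x < m \<longleftrightarrow> x < m" for x
    using permutes_in_image[OF \<rho>] by simp
  have \<rho>_inj: "\<rho> x = \<rho> y \<longleftrightarrow> x = y" for x y
    using permutes_inj[OF \<rho>] by (auto dest: injD)
  have \<rho>\<sigma>': "\<rho> (\<sigma>' x) = \<sigma> (\<rho> x)" for x
    using permutes_inverses(1)[OF \<rho>] by (simp add: \<sigma>'_def)
  have C'_entry: "C' $$ (x, y) = C $$ (\<rho> x, \<rho> y)" if "x < m" "y < m" for x y
    using that by (simp add: C'_def)
  have "C' \<in> carrier_mat m m"
    by (simp add: C'_def)
  moreover have "\<sigma>' permutes {..<m}"
    unfolding \<sigma>'_def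
    by (intro permutes_compose[OF \<rho>] permutes_compose[OF quasi_reduced_permutes[OF C]] permutes_inv[OF \<rho>])
  moreover have "\<sigma>' (\<sigma>' x) = x" for x
    using \<rho>\<sigma>' \<rho>_inj quasi_reduced_involution[OF C] by metis
  moreover have "C' $$ (x, y) = C' $$ (y, x)" if "x < m" "y < m" for x y
    using that quasi_reduced_sym[OF C] by (simp add: C'_entry \<rho>_less)
  moreover have "ord_ge v (C' $$ (x, x)) ((a \<circ> \<rho>) x)" if "x < m" for x
    using that quasi_reduced_diag[OF C] by (simp add: C'_entry \<rho>_less)
  moreover have "ord_gt_half (2 * C' $$ (x, y)) ((a \<circ> \<rho>) x + (a \<circ> \<rho>) y)"
    if "x < m" "y < m" "x \<noteq> y" "y \<noteq> \<sigma>' x" for x y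
    using that quasi_reduced_off[OF C, of "\<rho> x" "\<rho> y"] \<rho>\<sigma>'[of x] \<rho>_inj[of y "\<sigma>' x"]
    by (simp add: C'_entry \<rho>_less \<rho>_inj)
  moreover have "2 * C' $$ (x, \<sigma>' x) \<noteq> 0 \<and> 2 * v (2 * C' $$ (x, \<sigma>' x)) = (a \<circ> \<rho>) x + (a \<circ> \<rho>) (\<sigma>' x)"
    if x: "x < m" and moved: "\<sigma>' x \<noteq> x" for x
  proof -
    have "\<sigma> (\<rho> x) \<noteq> \<rho> x"
      using moved \<rho>\<sigma>'[of x] \<rho>_inj[of "\<sigma>' x" x] by simp
    moreover have "\<sigma>' x < m"
      using x permutes_in_image[OF \<open>\<sigma>' permutes {..<m}\<close>, of x] by simp
    ultimately show ?thesis
      using x quasi_reduced_moved[OF C, of "\<rho> x"] by (simp add: C'_entry \<rho>_less \<rho>\<sigma>')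
  qed
  moreover have "C' $$ (x, x) \<noteq> 0 \<and> v (C' $$ (x, x)) = (a \<circ> \<rho>) x" if "x < m" "\<sigma>' x = x" for x
    using that quasi_reduced_fixed[OF C, of "\<rho> x"] \<rho>\<sigma>'[of x] by (simp add: C'_entry \<rho>_less)
  ultimately show ?thesis
    unfolding \<sigma>'_def[symmetric] C'_def[symmetric] by (rule quasi_reducedI)
qed

lemma P0_permute:
  assumes \<rho>: "\<rho> permutes {..<m}"
  shows "P0 m \<sigma> = \<rho> ` P0 m (inv_into UNIV \<rho> \<circ> \<sigma> \<circ> \<rho>)"
proof -
  have "inv_into UNIV \<rho> (\<sigma> (\<rho> x)) = x \<longleftrightarrow> \<sigma> (\<rho> x) = \<rho> x" for x
    by (metis permutes_inverses[OF \<rho>])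
  then have "P0 m (inv_into UNIV \<rho> \<circ> \<sigma> \<circ> \<rho>) = \<rho> -` P0 m \<sigma>"
    using permutes_in_image[OF \<rho>] by (auto simp: P0_def)
  then show ?thesis
    using permutes_surj[OF \<rho>] by (simp add: surj_image_vimage_eq)
qed

lemma quasi_reduced_perturb:
  assumes C: "quasi_reduced m a \<sigma> C" and C': "C' \<in> carrier_mat m m"
    and sym: "\<And>i j. i < m \<Longrightarrow> j < m \<Longrightarrow> C' $$ (i, j) = C' $$ (j, i)"
    and off: "\<And>i j. i < m \<Longrightarrow> j < m \<Longrightarrow> ord_gt_half (2 * (C $$ (i, j) - C' $$ (i, j))) (a i + a j)"
    and diag: "\<And>i. i < m \<Longrightarrow> ord_gt_half (C $$ (i, i) - C' $$ (i, i)) (2 * a i)"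
  shows "quasi_reduced m a \<sigma> C'"
proof (rule quasi_reducedI[OF C' quasi_reduced_permutes[OF C] quasi_reduced_involution[OF C] sym])
  fix i assume i: "i < m"
  have "ord_ge v (C $$ (i, i) - C' $$ (i, i)) (a i)"
    using ord_gt_half_imp_ge[OF diag[OF i]] by (simp add: ord_ge_half_double)
  from ord_ge_diff[OF quasi_reduced_diag[OF C i] this] show "ord_ge v (C' $$ (i, i)) (a i)"
    by simp
  show "2 * C' $$ (i, \<sigma> i) \<noteq> 0 \<and> 2 * v (2 * C' $$ (i, \<sigma> i)) = a i + a (\<sigma> i)" if moved: "\<sigma> i \<noteq> i"
  proof -
    have "\<sigma> i < m"
      using permutes_in_image[OF quasi_reduced_permutes[OF C]] i by simp
    note exact = quasi_reduced_moved[OF C i moved]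
    have small: "ord_gt_half (- (2 * (C $$ (i, \<sigma> i) - C' $$ (i, \<sigma> i)))) (2 * v (2 * C $$ (i, \<sigma> i)))"
      using off[OF i \<open>\<sigma> i < m\<close>] exact by (simp only: ord_gt_half_minus)
    have eq: "2 * C $$ (i, \<sigma> i) + - (2 * (C $$ (i, \<sigma> i) - C' $$ (i, \<sigma> i))) = 2 * C' $$ (i, \<sigma> i)"
      by (simp add: algebra_simps)
    from val_add_dominant_half[OF conjunct1[OF exact] small] exact show ?thesis
      unfolding eq by simp
  qed
  show "C' $$ (i, i) \<noteq> 0 \<and> v (C' $$ (i, i)) = a i" if fixed: "\<sigma> i = i"
  proof -
    note exact = quasi_reduced_fixed[OF C i fixed]
    have small: "ord_gt_half (- (C $$ (i, i) - C' $$ (i, i))) (2 * v (C $$ (i, i)))"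
      using diag[OF i] exact by (simp only: ord_gt_half_minus)
    have eq: "C $$ (i, i) + - (C $$ (i, i) - C' $$ (i, i)) = C' $$ (i, i)"
      by simp
    from val_add_dominant_half[OF conjunct1[OF exact] small] exact show ?thesis
      unfolding eq by simp
  qed
next
  fix i j assume "i < m" "j < m" "i \<noteq> j" "j \<noteq> \<sigma> i"
  then have "ord_gt_half (2 * C $$ (i, j) - 2 * (C $$ (i, j) - C' $$ (i, j))) (a i + a j)"
    by (intro ord_gt_half_diff quasi_reduced_off[OF C] off)
  then show "ord_gt_half (2 * C' $$ (i, j)) (a i + a j)"
    by (simp add: right_diff_distrib)
qed

lemma quasi_reduced_leading_block:
  assumes C: "quasi_reduced m a \<sigma> C" and "k \<le> m" and invariant: "\<And>i. i < k \<Longrightarrow> \<sigma> i < k"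
  shows "quasi_reduced k a (\<lambda>i. if i < k then \<sigma> i else i) (mat k k (\<lambda>(i, j). C $$ (i, j)))"
proof -
  define \<sigma>' where "\<sigma>' i = (if i < k then \<sigma> i else i)" for i
  define C' where "C' = mat k k (\<lambda>(i, j). C $$ (i, j))"
  have entry: "C' $$ (i, j) = C $$ (i, j)" if "i < k" "j < k" for i j
    using that by (simp add: C'_def)
  have less: "i < m" if "i < k" for i
    using that \<open>k \<le> m\<close> by simp
  have "C' \<in> carrier_mat k k"
    by (simp add: C'_def)
  moreover have "\<sigma>' permutes {..<k}"
    by (rule bij_imp_permutes, rule bij_betw_byWitness[where f' = \<sigma>'])
      (auto simp: \<sigma>'_def invariant quasi_reduced_involution[OF C])
  moreover have "\<sigma>' (\<sigma>' i) = i" for i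
    by (simp add: \<sigma>'_def invariant quasi_reduced_involution[OF C])
  moreover have "C' $$ (i, j) = C' $$ (j, i)" if "i < k" "j < k" for i j
    using quasi_reduced_sym[OF C less less] that by (simp add: entry)
  moreover have "ord_ge v (C' $$ (i, i)) (a i)" if "i < k" for i
    using quasi_reduced_diag[OF C less] that by (simp add: entry)
  moreover have "ord_gt_half (2 * C' $$ (i, j)) (a i + a j)" if "i < k" "j < k" "i \<noteq> j" "j \<noteq> \<sigma>' i" for i j
    using quasi_reduced_off[OF C less less] that by (simp add: entry \<sigma>'_def)
  moreover have "2 * C' $$ (i, \<sigma>' i) \<noteq> 0 \<and> 2 * v (2 * C' $$ (i, \<sigma>' i)) = a i + a (\<sigma>' i)"
    if "i < k" "\<sigma>' i \<noteq> i" for i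
    using quasi_reduced_moved[OF C less, of i] that invariant[of i]
    unfolding \<sigma>'_def by (simp only: if_True entry) blast
  moreover have "C' $$ (i, i) \<noteq> 0 \<and> v (C' $$ (i, i)) = a i" if "i < k" "\<sigma>' i = i" for i
    using quasi_reduced_fixed[OF C less, of i] that unfolding \<sigma>'_def by (simp only: if_True entry) blast
  ultimately show ?thesis
    unfolding \<sigma>'_def[symmetric] C'_def[symmetric] by (rule quasi_reducedI)
qed

lemma reduced_form_quasi_reduced:
  assumes "reduced_form v n a \<sigma> B"
  shows "quasi_reduced n (\<lambda>i. int (a i)) \<sigma> B"
proof -
  have B: "B \<in> carrier_mat n n" and "B\<^sup>T = B"
    using assms by (simp_all add: reduced_form_def H_int_def)
  then have "B $$ (i, j) = B $$ (j, i)" if "i < n" "j < n" for i j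
    using that by (metis index_transpose_mat(1) carrier_matD)
  then show ?thesis
    using assms B unfolding reduced_form_def admissible_def quasi_reduced_def
    by (auto simp: ord_gt_half_def P0_def)
qed

lemma reduced_form_fixed_points:
  assumes "reduced_form v n a \<sigma> B"
  shows "card (P0 n \<sigma>) \<le> 2"
    and "i \<in> P0 n \<sigma> \<Longrightarrow> j \<in> P0 n \<sigma> \<Longrightarrow> i \<noteq> j \<Longrightarrow> \<not> same_par (a i) (a j)"
    and "i \<in> P0 n \<sigma> \<Longrightarrow> v (B $$ (i, i)) = int (a i)"
proof -
  have "admissible n a \<sigma>"
    using assms unfolding reduced_form_def by (elim conjE)
  note admissible = this[unfolded admissible_def]
  have fixed: "\<forall>i\<in>P0 n \<sigma>. B $$ (i, i) \<noteq> 0 \<and> v (B $$ (i, i)) = int (a i)"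
    using assms unfolding reduced_form_def by (elim conjE)
  show "card (P0 n \<sigma>) \<le> 2"
    using admissible by blast
  show "\<not> same_par (a i) (a j)" if "i \<in> P0 n \<sigma>" "j \<in> P0 n \<sigma>" "i \<noteq> j"
    using admissible that by blast
  show "v (B $$ (i, i)) = int (a i)" if "i \<in> P0 n \<sigma>"
    using fixed that by blast
qed

end

context dyadic_valuation
begin

lemma quasi_reduced_pair_complement:
  assumes C: "quasi_reduced (k + 2) a \<sigma> C" and pair: "\<sigma> k = k + 1"
  shows "quasi_reduced k a (\<lambda>i. if i < k then \<sigma> i else i) (pair_complement C k)"
proof -
  have pair': "\<sigma> (k + 1) = k"
    using quasi_reduced_involution[OF C, of k] pair by simp
  have invariant: "\<sigma> x < k" if "x < k" for x
  proof -
    have "\<sigma> x < k + 2"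
      using permutes_in_image[OF quasi_reduced_permutes[OF C], of x] that by simp
    moreover have "\<sigma> x \<noteq> k" and "\<sigma> x \<noteq> k + 1"
      using that quasi_reduced_involution[OF C, of x] pair pair' by force+
    ultimately show ?thesis
      by linarith
  qed
  define p q s where "p = C $$ (k, k)" and "q = C $$ (k, k + 1)" and "s = C $$ (k + 1, k + 1)"
  define c where "c x y = pair_correction p q s (C $$ (x, k)) (C $$ (x, k + 1)) (C $$ (y, k)) (C $$ (y, k + 1))"
    for x y
  have S: "pair_complement C k $$ (x, y) = C $$ (x, y) - c x y" if "x < k" "y < k" for x y
    using that by (simp add: pair_complement_def c_def p_def q_def s_def)
  have q: "2 * q \<noteq> 0" "2 * v (2 * q) = a k + a (k + 1)"
    using quasi_reduced_moved[OF C, of k] pair by (simp_all add: q_def)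
  have p: "ord_ge v p (a k)" and s: "ord_ge v s (a (k + 1))"
    using quasi_reduced_diag[OF C, of k] quasi_reduced_diag[OF C, of "k + 1"] by (simp_all add: p_def s_def)
  have col: "ord_gt_half (2 * C $$ (x, k)) (a x + a k)" "ord_gt_half (2 * C $$ (x, k + 1)) (a x + a (k + 1))"
    if "x < k" for x
    using quasi_reduced_off[OF C, of x k] quasi_reduced_off[OF C, of x "k + 1"] that invariant[OF that]
    by simp_all
  show ?thesis
  proof (rule quasi_reduced_perturb[OF quasi_reduced_leading_block[OF C _ invariant]])
    fix x y assume "x < k" "y < k"
    then show "pair_complement C k $$ (x, y) = pair_complement C k $$ (y, x)"
      using quasi_reduced_sym[OF C, of x y] by (simp add: S c_def pair_correction_sym)
    show "ord_gt_half (2 * (mat k k (\<lambda>(i, j). C $$ (i, j)) $$ (x, y) - pair_complement C k $$ (x, y)))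
        (a x + a y)"
      using pair_correction_bound[OF q p s col(1)[of x] col(1)[of y] col(2)[of x] col(2)[of y]]
        \<open>x < k\<close> \<open>y < k\<close> by (simp add: S c_def)
  next
    fix x assume "x < k"
    then show "ord_gt_half (mat k k (\<lambda>(i, j). C $$ (i, j)) $$ (x, x) - pair_complement C k $$ (x, x)) (2 * a x)"
      using pair_correction_diag_bound[OF q p s col[of x]] by (simp add: S c_def)
  qed (simp_all add: pair_complement_def)
qed

lemma det_quasi_reduced_pair_complement:
  assumes C: "quasi_reduced (k + 2) a \<sigma> C" and pair: "\<sigma> k = k + 1"
  obtains \<delta> where "det C = \<delta> * det (pair_complement C k)" and "sq_class_1_plus_4o (- 4 * \<delta>)"
proof -
  define p q s where "p = C $$ (k, k)" and "q = C $$ (k, k + 1)" and "s = C $$ (k + 1, k + 1)"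
  have q: "2 * q \<noteq> 0" "2 * v (2 * q) = a k + a (k + 1)"
    using quasi_reduced_moved[OF C, of k] pair by (simp_all add: q_def)
  have "ord_ge v p (a k)" and "ord_ge v s (a (k + 1))"
    using quasi_reduced_diag[OF C, of k] quasi_reduced_diag[OF C, of "k + 1"] by (simp_all add: p_def s_def)
  then obtain t where "ord_ge v t 0" and "- 4 * (p * s - q * q) = (2 * q) * (2 * q) * (1 + 4 * t)"
    using pair_discriminant[OF q] by blast
  then have discriminant: "sq_class_1_plus_4o (- 4 * (p * s - q * q))"
    unfolding sq_class_1_plus_4o_def using q(1) by blast
  then have "p * s - q * q \<noteq> 0"
    using sq_class_1_plus_4o_val by fastforce
  then have "det C = (p * s - q * q) * det (pair_complement C k)"
    unfolding p_def q_def s_def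
    by (intro det_pair_complement quasi_reduced_carrier[OF C]) (simp add: quasi_reduced_sym[OF C])
  with discriminant show ?thesis
    using that by blast
qed

lemma quasi_reduced_reduction:
  assumes C: "quasi_reduced m a \<sigma> C" and i: "i < m" "\<sigma> i \<noteq> i"
  obtains k \<rho> \<sigma>' S \<delta> where "m = k + 2" and "\<rho> permutes {..<m}" and "quasi_reduced k (a \<circ> \<rho>) \<sigma>' S"
    and "P0 m \<sigma> = \<rho> ` P0 k \<sigma>'" and "det C = \<delta> * det S" and "sq_class_1_plus_4o (- 4 * \<delta>)"
proof -
  have j: "\<sigma> i < m"
    using permutes_in_image[OF quasi_reduced_permutes[OF C]] i by simp
  define k where "k = m - 2"
  have m: "m = k + 2"
    using i j unfolding k_def by linarith
  obtain \<rho> where \<rho>: "\<rho> permutes {..<m}" "\<rho> k = i" "\<rho> (k + 1) = \<sigma> i"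
    using permutes_pair_exists[of i "{..<m}" "\<sigma> i" k "k + 1"] i j m by auto
  define \<sigma>' where "\<sigma>' = inv_into UNIV \<rho> \<circ> \<sigma> \<circ> \<rho>"
  define C' where "C' = mat m m (\<lambda>(x, y). C $$ (\<rho> x, \<rho> y))"
  have C': "quasi_reduced (k + 2) (a \<circ> \<rho>) \<sigma>' C'"
    using quasi_reduced_permute[OF C \<rho>(1)] m by (simp add: \<sigma>'_def C'_def)
  have pair: "\<sigma>' k = k + 1"
    using \<rho> permutes_inverses(2)[OF \<rho>(1), of "k + 1"] by (simp add: \<sigma>'_def)
  then have pair': "\<sigma>' (k + 1) = k"
    using quasi_reduced_involution[OF C', of k] by simp
  define \<sigma>'' where "\<sigma>'' x = (if x < k then \<sigma>' x else x)" for x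
  have "P0 (k + 2) \<sigma>' = P0 k \<sigma>''"
    using pair pair' by (auto simp: P0_def \<sigma>''_def less_Suc_eq)
  then have "P0 m \<sigma> = \<rho> ` P0 k \<sigma>''"
    using P0_permute[OF \<rho>(1), of \<sigma>] m by (simp add: \<sigma>'_def)
  moreover have "quasi_reduced k (a \<circ> \<rho>) \<sigma>'' (pair_complement C' k)"
    unfolding \<sigma>''_def by (rule quasi_reduced_pair_complement[OF C' pair])
  moreover obtain \<delta> where "det C' = \<delta> * det (pair_complement C' k)" "sq_class_1_plus_4o (- 4 * \<delta>)"
    using det_quasi_reduced_pair_complement[OF C' pair] .
  moreover have "det C' = det C"
    unfolding C'_def using det_permute_rows_cols[OF quasi_reduced_carrier[OF C] \<rho>(1)] .
  ultimately show ?thesis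
    using that m \<rho>(1) by metis
qed

lemma det_sq_class_if_no_fixed_points:
  "quasi_reduced m a \<sigma> C \<Longrightarrow> P0 m \<sigma> = {} \<Longrightarrow> sq_class_1_plus_4o ((- 4) ^ (m div 2) * det C)"
proof (induction m arbitrary: a \<sigma> C rule: less_induct)
  case (less m)
  show ?case
  proof (cases "\<exists>i<m. \<sigma> i \<noteq> i")
    case False
    with less.prems(2) have "m = 0"
      by (auto simp: P0_def)
    then have "(- 4) ^ (m div 2) * det C = 1 * 1 * (1 + 4 * 0)"
      using quasi_reduced_carrier[OF less.prems(1)] by simp
    then show ?thesis
      unfolding sq_class_1_plus_4o_def by (intro exI[of _ 1] exI[of _ 0]) simp
  next
    case True
    then obtain i where "i < m" "\<sigma> i \<noteq> i"
      by blast
    from quasi_reduced_reduction[OF less.prems(1) this] obtain k \<rho> \<sigma>' S \<delta>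
      where m: "m = k + 2" and S: "quasi_reduced k (a \<circ> \<rho>) \<sigma>' S" and "P0 m \<sigma> = \<rho> ` P0 k \<sigma>'"
        and det: "det C = \<delta> * det S" and \<delta>: "sq_class_1_plus_4o (- 4 * \<delta>)" .
    with less.prems(2) have "P0 k \<sigma>' = {}"
      by simp
    with less.IH[OF _ S] m have "sq_class_1_plus_4o ((- 4) ^ (k div 2) * det S)"
      by simp
    with \<delta> have "sq_class_1_plus_4o ((- 4 * \<delta>) * ((- 4) ^ (k div 2) * det S))"
      by (rule sq_class_1_plus_4o_mult)
    moreover have "m div 2 = Suc (k div 2)"
      using m by simp
    ultimately show ?thesis
      by (simp add: det mult_ac)
  qed
qed

lemma det_val_parity_if_one_fixed_point:
  "quasi_reduced m a \<sigma> C \<Longrightarrow> P0 m \<sigma> = {i0} \<Longrightarrow> det C \<noteq> 0 \<and> v (det C) mod 2 = a i0 mod 2"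
proof (induction m arbitrary: a \<sigma> C i0 rule: less_induct)
  case (less m)
  show ?case
  proof (cases "\<exists>i<m. \<sigma> i \<noteq> i")
    case False
    with less.prems(2) have "{..<m} = {i0}"
      by (auto simp: P0_def)
    then have "m = 1"
      using card_lessThan[of m] by simp
    with \<open>{..<m} = {i0}\<close> have "i0 = 0"
      by auto
    moreover have "det C = C $$ (0, 0)"
      using quasi_reduced_carrier[OF less.prems(1)] \<open>m = 1\<close> by (simp add: det_single)
    ultimately show ?thesis
      using quasi_reduced_fixed[OF less.prems(1), of 0] False \<open>m = 1\<close> by simp
  next
    case True
    then obtain i where "i < m" "\<sigma> i \<noteq> i"
      by blast
    from quasi_reduced_reduction[OF less.prems(1) this] obtain k \<rho> \<sigma>' S \<delta>
      where m: "m = k + 2" and \<rho>: "\<rho> permutes {..<m}" and S: "quasi_reduced k (a \<circ> \<rho>) \<sigma>' S"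
        and P0: "P0 m \<sigma> = \<rho> ` P0 k \<sigma>'"
        and det: "det C = \<delta> * det S" and \<delta>: "sq_class_1_plus_4o (- 4 * \<delta>)" .
    obtain x0 where "P0 k \<sigma>' = {x0}" and x0: "i0 = \<rho> x0"
      using inj_img_insertE[OF inj_on_subset[OF permutes_inj[OF \<rho>] subset_UNIV], of i0 "{}" "P0 k \<sigma>'"]
        P0 less.prems(2) by auto
    with less.IH[OF _ S] m have "det S \<noteq> 0" and "v (det S) mod 2 = a i0 mod 2"
      by auto
    moreover have "\<delta> \<noteq> 0" and "even (v \<delta>)"
      using sq_class_1_plus_4o_val[OF \<delta>] val_mult[of "- 4" \<delta>] val_four by auto
    ultimately show ?thesis
      using val_mult[of \<delta> "det S"] by (auto simp: det)
  qed
qed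

end

section \<open>Norms from unramified quadratic extensions\<close>

context discrete_valuation
begin

lemma valuation_complete_converges:
  assumes complete: "valuation_complete v" and diff: "\<And>n. ord_ge v (g (Suc n) - g n) (int n)"
  obtains L where "\<And>N. \<exists>M. \<forall>n\<ge>M. ord_ge v (g n - L) N"
proof -
  have tail: "ord_ge v (g n - g M) (int M)" if "M \<le> n" for M n
    using that
  proof (induction n rule: dec_induct)
    case (step n)
    have "ord_ge v (g (Suc n) - g n) (int M)"
      using diff[of n] by (rule ord_ge_mono) (use step.hyps(1) in simp)
    from ord_ge_add[OF this step.IH] show ?case
      by simp
  qed simp
  have "\<forall>m\<ge>nat N. \<forall>n\<ge>nat N. ord_ge v (g m - g n) N" for N
  proof (intro allI impI)
    fix m n assume "nat N \<le> m" "nat N \<le> n"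
    then have "ord_ge v (g m - g (nat N)) N" and "ord_ge v (g n - g (nat N)) N"
      using tail[of "nat N" m] tail[of "nat N" n] ord_ge_mono by fastforce+
    then have "ord_ge v ((g m - g (nat N)) - (g n - g (nat N))) N"
      by (rule ord_ge_diff)
    then show "ord_ge v (g m - g n) N"
      by simp
  qed
  then show ?thesis
    using complete that unfolding valuation_complete_def by blast
qed

end

context dyadic_valuation
begin

lemma unit_one_plus_two: "ord_ge v x 0 \<Longrightarrow> 2 * x + 1 \<noteq> 0 \<and> v (2 * x + 1) = 0"
  using ord_ge_mult[of 2 1 x 0] val_two val_one_plus[of "2 * x"]
  by (simp add: ord_ge_def add.commute)

lemma artin_schreier_newton_step:
  assumes x: "ord_ge v x 0" and fx: "ord_ge v (x * x + x - t) n" and n: "0 \<le> n"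
  defines "h \<equiv> (x * x + x - t) / (2 * x + 1)"
  shows "ord_ge v h n" and "ord_ge v (x - h) 0" and "(x - h) * (x - h) + (x - h) - t = h * h"
proof -
  have u: "2 * x + 1 \<noteq> 0" "v (2 * x + 1) = 0"
    using unit_one_plus_two[OF x] by simp_all
  then show h: "ord_ge v h n"
    using fx by (cases "x * x + x - t = 0") (simp_all add: h_def ord_ge_def val_divide)
  show "ord_ge v (x - h) 0"
    using ord_ge_diff[OF x ord_ge_mono[OF h n]] .
  have "h * (2 * x + 1) = x * x + x - t"
    using u by (simp add: h_def)
  then show "(x - h) * (x - h) + (x - h) - t = h * h"
    by (simp add: algebra_simps)
qed

lemma artin_schreier_approximations:
  assumes f: "ord_ge v f 0" "ord_ge v (f * f + f - t) 1"
  obtains g where "\<And>n. ord_ge v (g n) 0" and "\<And>n. ord_ge v (g n * g n + g n - t) (int n + 1)"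
    and "\<And>n. ord_ge v (g (Suc n) - g n) (int n + 1)"
proof -
  define P where "P x = x * x + x - t" for x
  define g where "g = rec_nat f (\<lambda>_ x. x - P x / (2 * x + 1))"
  have g_Suc: "g (Suc n) = g n - P (g n) / (2 * g n + 1)" for n
    by (simp add: g_def)
  have approx: "ord_ge v (g n) 0 \<and> ord_ge v (P (g n)) (int n + 1)" for n
  proof (induction n)
    case 0
    then show ?case
      using f by (simp add: g_def P_def)
  next
    case (Suc n)
    define h where "h = P (g n) / (2 * g n + 1)"
    have "ord_ge v h (int n + 1)" "ord_ge v (g n - h) 0" "P (g n - h) = h * h"
      using artin_schreier_newton_step[of "g n" t "int n + 1"] Suc by (simp_all add: h_def P_def)
    moreover have "ord_ge v (h * h) (int (Suc n) + 1)"
      using ord_ge_mult[OF \<open>ord_ge v h (int n + 1)\<close> \<open>ord_ge v h (int n + 1)\<close>] by (rule ord_ge_mono) simp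
    ultimately show ?case
      by (simp add: g_Suc h_def)
  qed
  moreover have "ord_ge v (g (Suc n) - g n) (int n + 1)" for n
    using artin_schreier_newton_step(1)[of "g n" t "int n + 1"] approx[of n]
    by (simp add: g_Suc P_def ord_ge_minus)
  ultimately show ?thesis
    using that[of g] by (simp add: P_def)
qed

lemma artin_schreier_hensel:
  assumes complete: "valuation_complete v" and f: "ord_ge v f 0" "ord_ge v (f * f + f - t) 1"
  shows "\<exists>x. x * x + x = t"
proof -
  obtain g where g: "\<And>n. ord_ge v (g n) 0" and approx: "\<And>n. ord_ge v (g n * g n + g n - t) (int n + 1)"
    and diff: "\<And>n. ord_ge v (g (Suc n) - g n) (int n + 1)"
    using artin_schreier_approximations[OF f] by blast
  have "ord_ge v (g (Suc n) - g n) (int n)" for n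
    using diff[of n] by (rule ord_ge_mono) simp
  then obtain L where L: "\<And>N. \<exists>M. \<forall>n\<ge>M. ord_ge v (g n - L) N"
    using valuation_complete_converges[OF complete] by blast
  obtain M where "\<forall>n\<ge>M. ord_ge v (g n - L) 0"
    using L by blast
  then have "ord_ge v (g M - (g M - L)) 0"
    using ord_ge_diff[OF g[of M]] by blast
  then have L0: "ord_ge v L 0"
    by simp
  have "ord_ge v (L * L + L - t) N" for N
  proof -
    obtain M where M: "\<forall>n\<ge>M. ord_ge v (g n - L) N"
      using L by blast
    define n where "n = max M (nat N)"
    have "ord_ge v (g n - L) N"
      using M by (simp add: n_def)
    moreover have "ord_ge v (g n + L + 1) 0"
      by (intro ord_ge_add g L0) (simp add: ord_ge_def)
    ultimately have "ord_ge v ((g n - L) * (g n + L + 1)) N"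
      using ord_ge_mult by fastforce
    moreover have "ord_ge v (g n * g n + g n - t) N"
      using approx[of n] by (rule ord_ge_mono) (simp add: n_def)
    ultimately have "ord_ge v ((g n * g n + g n - t) - (g n - L) * (g n + L + 1)) N"
      by (rule ord_ge_diff[rotated])
    then show ?thesis
      by (simp add: algebra_simps)
  qed
  from this[of "v (L * L + L - t) + 1"] have "L * L + L - t = 0"
    by (simp add: ord_ge_def)
  then show ?thesis
    by (intro exI[of _ L]) simp
qed

lemma artin_schreier_val_even:
  assumes t: "ord_ge v t 0" and no_root: "\<And>f. ord_ge v f 0 \<Longrightarrow> \<not> ord_ge v (f * f + f - t) 1"
    and d: "ord_ge v d 0"
  shows "d * d + 2 * d - 4 * t \<noteq> 0 \<and> even (v (d * d + 2 * d - 4 * t))"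
proof (cases "d \<noteq> 0 \<and> v d < v 2")
  case True
  have "ord_ge v (2 * d) (v (d * d) + 1)"
    using True by (simp add: ord_ge_def val_mult val_square)
  moreover have "ord_ge v (4 * t) (v 4)"
    using ord_ge_mult[of 4 "v 4" t 0] t by (simp add: ord_ge_def)
  then have "ord_ge v (4 * t) (v (d * d) + 1)"
    by (rule ord_ge_mono) (use True val_four in \<open>simp add: val_square\<close>)
  ultimately have "ord_ge v (2 * d - 4 * t) (v (d * d) + 1)"
    by (rule ord_ge_diff)
  with True show ?thesis
    using val_add_dominant[of "d * d" "2 * d - 4 * t"] by (simp add: val_square algebra_simps)
next
  case False
  define f where "f = d / 2"
  have "ord_ge v f 0"
    using False d by (cases "d = 0") (simp_all add: f_def ord_ge_def val_divide)
  then have "ord_ge v (f * f + f - t) 0" and "\<not> ord_ge v (f * f + f - t) 1"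
    using ord_ge_mult[of f 0 f 0] t no_root by (simp_all add: ord_ge_add ord_ge_diff)
  then have unit: "f * f + f - t \<noteq> 0" "v (f * f + f - t) = 0"
    by (auto simp: ord_ge_def)
  then have "4 * (f * f + f - t) \<noteq> 0"
    by (intro no_zero_divisors) simp_all
  moreover have "even (v (4 * (f * f + f - t)))"
    using unit val_mult[of 4 "f * f + f - t"] val_four by simp
  moreover have "d * d + 2 * d - 4 * t = 4 * (f * f + f - t)"
    by (simp add: f_def field_simps)
  ultimately show ?thesis
    by simp
qed

lemma norm_val_even:
  assumes t: "ord_ge v t 0" and no_root: "\<And>f. ord_ge v f 0 \<Longrightarrow> \<not> ord_ge v (f * f + f - t) 1"
    and N: "x * x - z * z * (1 + 4 * t) \<noteq> 0"
  shows "even (v (x * x - z * z * (1 + 4 * t)))"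
proof -
  have u: "1 + 4 * t \<noteq> 0" "v (1 + 4 * t) = 0"
    using unit_one_plus_four[OF t] by simp_all
  consider "x = 0" | "z = 0" | "x \<noteq> 0" "z \<noteq> 0" "v x \<noteq> v z" | "x \<noteq> 0" "z \<noteq> 0" "v x = v z"
    by blast
  then show ?thesis
  proof cases
    case 3
    then have "x * x + - (z * z * (1 + 4 * t)) \<noteq> 0 \<and>
        v (x * x + - (z * z * (1 + 4 * t))) = min (v (x * x)) (v (- (z * z * (1 + 4 * t))))"
      using u by (intro val_add_neq) (simp_all add: val_mult val_square)
    then show ?thesis
      using 3 u by (simp add: val_mult val_square min_def)
  next
    case 4
    define d where "d = x / z - 1"
    have "ord_ge v (x / z) 0"
      using 4 by (simp add: ord_ge_def val_divide)
    then have "ord_ge v d 0"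
      unfolding d_def by (rule ord_ge_diff) (simp add: ord_ge_def)
    then have "d * d + 2 * d - 4 * t \<noteq> 0 \<and> even (v (d * d + 2 * d - 4 * t))"
      using artin_schreier_val_even[OF t no_root] by blast
    moreover have "x * x - z * z * (1 + 4 * t) = (z * z) * (d * d + 2 * d - 4 * t)"
      using 4 by (simp add: d_def field_simps)
    ultimately show ?thesis
      using 4 by (simp add: val_mult val_square)
  qed (use N u in \<open>simp_all add: val_mult val_square\<close>)
qed

lemma sq_class_1_plus_4o_not_ramified:
  assumes complete: "valuation_complete v" and D: "sq_class_1_plus_4o D"
  shows "\<not> ramified_quadratic v D"
proof
  assume ramified: "ramified_quadratic v D"
  obtain c t where c: "c \<noteq> 0" and t: "ord_ge v t 0" and D: "D = c * c * (1 + 4 * t)"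
    using D unfolding sq_class_1_plus_4o_def by blast
  have no_root: "\<not> ord_ge v (f * f + f - t) 1" if f: "ord_ge v f 0" for f
  proof
    assume "ord_ge v (f * f + f - t) 1"
    then obtain g where "g * g + g = t"
      using artin_schreier_hensel[OF complete f] by blast
    then have "D = (c * (2 * g + 1)) * (c * (2 * g + 1))"
      unfolding D by (auto simp: algebra_simps)
    then show False
      using ramified unfolding ramified_quadratic_def is_square_def by blast
  qed
  obtain x y where N: "x * x - D * (y * y) \<noteq> 0" and odd: "odd (v (x * x - D * (y * y)))"
    using ramified unfolding ramified_quadratic_def by blast
  have eq: "x * x - D * (y * y) = x * x - (c * y) * (c * y) * (1 + 4 * t)"
    by (simp add: D algebra_simps)
  from N odd show False
    unfolding eq using norm_val_even[OF t no_root, of x "c * y"] by blast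
qed

end

context dyadic_valuation
begin

lemma reduced_form_fixed_point_parity_if_odd:
  assumes B: "reduced_form v n a \<sigma> B" and "odd n" and i0: "i0 \<in> P0 n \<sigma>"
  shows "v (B $$ (i0, i0)) mod 2 = v (det B) mod 2"
proof -
  note C = reduced_form_quasi_reduced[OF B]
  have "odd (card (P0 n \<sigma>))"
    using even_card_P0_iff[OF quasi_reduced_permutes[OF C]] quasi_reduced_involution[OF C] \<open>odd n\<close> by blast
  with reduced_form_fixed_points(1)[OF B] have "card (P0 n \<sigma>) = 1"
    by (auto simp: le_Suc_eq numeral_2_eq_2)
  with i0 have "P0 n \<sigma> = {i0}"
    by (metis card_1_singletonE singletonD)
  then show ?thesis
    using det_val_parity_if_one_fixed_point[OF C] reduced_form_fixed_points(3)[OF B i0] by simp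
qed

lemma reduced_form_fixed_points_if_ramified:
  assumes complete: "valuation_complete v" and B: "reduced_form v n a \<sigma> B" and "even n"
    and ramified: "xi_zero v n B"
  shows "\<exists>i0\<in>P0 n \<sigma>. v (B $$ (i0, i0)) mod 2 = k mod 2"
proof -
  note C = reduced_form_quasi_reduced[OF B]
  have "P0 n \<sigma> \<noteq> {}"
    using det_sq_class_if_no_fixed_points[OF C] sq_class_1_plus_4o_not_ramified[OF complete] ramified
    by (auto simp: xi_zero_def D_of_def)
  then have "card (P0 n \<sigma>) \<noteq> 0"
    by (simp add: P0_def)
  moreover have "even (card (P0 n \<sigma>))"
    using even_card_P0_iff[OF quasi_reduced_permutes[OF C]] quasi_reduced_involution[OF C] \<open>even n\<close> by blast
  ultimately have "card (P0 n \<sigma>) = 2"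
    using reduced_form_fixed_points(1)[OF B] by (auto simp: le_Suc_eq numeral_2_eq_2)
  then obtain i j where P0: "P0 n \<sigma> = {i, j}" and "i \<noteq> j"
    by (meson card_2_iff)
  then have "even (a i) \<longleftrightarrow> odd (a j)"
    using reduced_form_fixed_points(2)[OF B, of i j] unfolding same_par_def
    by (auto simp: mod2_eq_if split: if_splits)
  then have "int (a i) mod 2 = k mod 2 \<or> int (a j) mod 2 = k mod 2"
    by (cases "even k") (auto simp: mod2_eq_if)
  then show ?thesis
    using P0 reduced_form_fixed_points(3)[OF B] by auto
qed

end

theorem proposition1p1:
  fixes ordF :: "'a::field_char_0 \<Rightarrow> int"
    and n :: nat and a \<sigma> :: "nat \<Rightarrow> nat" and B :: "'a mat"
  assumes F: "dyadic_local_field ordF"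
    and red: "reduced_form ordF n a \<sigma> B"
    and nondeg: "det B \<noteq> 0"
  shows "(odd n \<longrightarrow> (\<forall>i0\<in>P0 n \<sigma>. ordF (B $$ (i0, i0)) mod 2 = ordF (det B) mod 2))
       \<and> (even n \<longrightarrow> xi_zero ordF n B \<longrightarrow>
            (\<forall>k::int. \<exists>i0\<in>P0 n \<sigma>. ordF (B $$ (i0, i0)) mod 2 = k mod 2))"
proof -
  (* nondeg is not used: in the odd case det B \<noteq> 0 follows from the reduction. *)
  have valuation: "normalized_discrete_valuation ordF" and complete: "valuation_complete ordF"
    and residue_field: "finite (residue_field ordF)" "even (card (residue_field ordF))"
    using F by (simp_all add: dyadic_local_field_def)
  interpret discrete_valuation ordF
    by (rule discrete_valuation.intro[OF valuation])
  interpret dyadic_valuation ordF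
    by unfold_locales (rule val_two_pos_if_even_residue_field[OF _ residue_field], simp)
  show ?thesis
    using reduced_form_fixed_point_parity_if_odd[OF red] reduced_form_fixed_points_if_ramified[OF complete red]
    by blast
qed

end
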